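(* Let $\ell$ be a positive odd integer and $n\ge 3$ an integer. Suppose there exist $k$ distinct primes $p_1,\dots,p_k\in P(n)$ such that any two of the numbers $p_1-1,\dots,p_k-1$ have no common odd prime factor. If $\Omega_\ell(n)$ is a powerful number, then $\ell$ has at least $k$ distinct prime factors.
   Context: A positive integer $a$ is called a powerful number if for every prime $p$, $p\mid a$ implies $p^2\mid a$. $\Omega_\ell(n)=\prod_{a=1}^{n}(a^\ell+1)$. For a positive integer $n$, $P(n)$ denotes the set of primes $p$ with $\frac{n+1}{2}<p\le n+1$. *)

theory Defs
  imports "HOL-Computational_Algebra.Primes"
begin

definition powerful :: "nat \<Rightarrow> bool" where
  "powerful a \<longleftrightarrow> a > 0 \<and> (\<forall>p. prime p \<longrightarrow> p dvd a \<longrightarrow> p^2 dvd a)"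

definition Omega :: "nat \<Rightarrow> nat \<Rightarrow> nat" where
  "Omega l n = (\<Prod>a=1..n. a ^ l + 1)"

(* (n+1)/2 < p  is written as  n+1 < 2*p  over the naturals *)
definition Pset :: "nat \<Rightarrow> nat set" where
  "Pset n = {p. prime p \<and> n + 1 < 2 * p \<and> p \<le> n + 1}"

end

theory Submission
  imports Defs "HOL-Number_Theory.Number_Theory"
begin

text \<open>
  Fix p in P(n). If gcd(l, p - 1) = 1, then x \<mapsto> x ^ l is a bijection modulo p,
  so among the factors a ^ l + 1 (a \<le> n) of Omega l n only (p - 1) ^ l + 1 is
  divisible by p: a \<equiv> -1 (mod p) together with a + 1 \<le> n + 1 < 2 p forces a = p - 1.
  Powerfulness then gives p ^ 2 | (p - 1) ^ l + 1 \<equiv> l p (mod p ^ 2), i.e. p | l.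
  Otherwise some odd prime divides both l and p - 1. Either way each p_i yields a
  prime factor q_i of l with q_i = p_i or q_i | p_i - 1, and these are distinct:
  p_i | p_j - 1 is impossible within P(n), and the hypothesis excludes a common
  odd prime factor of p_i - 1 and p_j - 1.
\<close>

lemma cong_one_if_coprime_exponents:
  fixes a m s t :: nat
  assumes "[a ^ s = 1] (mod m)" and "[a ^ t = 1] (mod m)" and "coprime s t"
  shows "[a = 1] (mod m)"
proof -
  have "ord m a dvd gcd s t"
    using assms(1,2) by (simp add: ord_divides')
  then have "ord m a dvd 1"
    using assms(3) by simp
  then show ?thesis
    using ord_divides[of a 1 m] by simp
qed

lemma prime_dvd_odd_power_add_one_imp_dvd_add_one:
  fixes p l x :: nat
  assumes p: "prime p" and l: "odd l" and cop: "coprime l (p - 1)"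
    and dvd: "p dvd x ^ l + 1"
  shows "p dvd x + 1"
proof -
  \<comment> \<open>y represents -x by a natural number, so that Fermat's theorem applies to it\<close>
  define y where "y = (p - 1) * x"
  have "int y = int p * int x - int x"
    using prime_ge_1_nat[OF p] by (simp add: y_def of_nat_diff algebra_simps)
  then have y_neg: "[int y = - int x] (mod int p)"
    by (simp add: cong_iff_dvd_diff)
  have "\<not> p dvd x"
  proof
    assume "p dvd x"
    then have "p dvd x ^ l"
      using p odd_pos[OF l] by (simp add: prime_dvd_power_nat_iff)
    with dvd have "p dvd 1"
      using dvd_add_right_iff by blast
    with p show False by simp
  qed
  moreover have "\<not> p dvd p - 1"
    using prime_gt_1_nat[OF p] by (simp add: nat_dvd_not_less)
  ultimately have "\<not> p dvd y"
    using p by (simp add: y_def prime_dvd_mult_iff)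
  then have fermat: "[y ^ (p - 1) = 1] (mod p)"
    by (rule fermat_theorem[OF p])
  have dvd_int: "int p dvd int x ^ l + 1"
    using dvd by (metis of_nat_dvd_iff of_nat_1 of_nat_add of_nat_power)
  have "[int y ^ l = (- int x) ^ l] (mod int p)"
    using y_neg by (rule cong_pow)
  also have "(- int x) ^ l = 1 - (int x ^ l + 1)"
    using l by simp
  also have "[1 - (int x ^ l + 1) = 1 - 0] (mod int p)"
    using dvd_int by (intro cong_diff cong_refl) (simp add: cong_0_iff)
  finally have "[int y ^ l = 1] (mod int p)"
    by simp
  then have "[y ^ l = 1] (mod p)"
    by (metis cong_int_iff of_nat_1 of_nat_power)
  then have "[y = 1] (mod p)"
    using fermat cop by (rule cong_one_if_coprime_exponents)
  then have "[1 = - int x] (mod int p)"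
    using y_neg by (metis cong_int_iff cong_sym cong_trans of_nat_1)
  then have "int p dvd int x + 1"
    by (simp add: cong_iff_dvd_diff add.commute)
  then show ?thesis
    by (metis of_nat_dvd_iff of_nat_1 of_nat_add)
qed

lemma diff_one_power_cong_mod_square:
  fixes b :: int
  shows "[(b - 1) ^ l = (-1) ^ l * (1 - int l * b)] (mod b^2)"
proof (induction l)
  case 0 show ?case by simp
next
  case (Suc l)
  have "[(b - 1) ^ Suc l = (b - 1) * ((-1) ^ l * (1 - int l * b))] (mod b^2)"
    using cong_mult[OF cong_refl Suc.IH, of "b - 1"] by simp
  also have "(b - 1) * ((-1) ^ l * (1 - int l * b))
      = (-1) ^ Suc l * (1 - int (Suc l) * b) + b^2 * (- ((-1) ^ l * int l))"
    by (simp add: algebra_simps power2_eq_square)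
  also have "[\<dots> = (-1) ^ Suc l * (1 - int (Suc l) * b)] (mod b^2)"
    by (simp add: cong_iff_lin)
  finally show ?case .
qed

lemma odd_power_pred_add_one_cong:
  fixes p l :: nat
  assumes "odd l" and "p > 0"
  shows "[(p - 1) ^ l + 1 = l * p] (mod p^2)"
proof -
  have "[(int p - 1) ^ l + 1 = (-1) ^ l * (1 - int l * int p) + 1] (mod (int p)^2)"
    by (intro cong_add diff_one_power_cong_mod_square cong_refl)
  then have "[int ((p - 1) ^ l + 1) = int (l * p)] (mod int (p^2))"
    using assms by (simp add: of_nat_diff Suc_le_eq add.commute)
  then show ?thesis by (simp only: cong_int_iff)
qed

lemma dvd_odd_power_pred_add_one:
  fixes p l :: nat
  assumes "odd l" and "p > 0"
  shows "p dvd (p - 1) ^ l + 1"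
proof -
  have "[(p - 1) ^ l + 1 = l * p] (mod p)"
    using odd_power_pred_add_one_cong[OF assms] by (rule cong_dvd_modulus_nat) simp
  then show ?thesis by (simp add: cong_dvd_iff)
qed

lemma square_dvd_odd_power_pred_add_one_iff:
  fixes p l :: nat
  assumes "odd l" and "p > 0"
  shows "p^2 dvd (p - 1) ^ l + 1 \<longleftrightarrow> p dvd l"
proof -
  have "p^2 dvd (p - 1) ^ l + 1 \<longleftrightarrow> p^2 dvd l * p"
    by (rule cong_dvd_iff[OF odd_power_pred_add_one_cong[OF assms]])
  also have "\<dots> \<longleftrightarrow> p dvd l"
    using assms(2) by (simp add: power2_eq_square)
  finally show ?thesis .
qed

lemma Pset_memD:
  assumes "p \<in> Pset n"
  shows "prime p" and "p \<le> n + 1" and "n + 1 < 2 * p"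
  using assms by (auto simp: Pset_def)

lemma Pset_odd:
  assumes "p \<in> Pset n" and "n \<ge> 3"
  shows "odd p"
proof -
  have "p > 2" using assms(2) Pset_memD(3)[OF assms(1)] by linarith
  then show ?thesis using Pset_memD(1)[OF assms(1)] prime_odd_nat by blast
qed

lemma Pset_not_dvd_pred:
  assumes "p \<in> Pset n" and "q \<in> Pset n" and "n \<ge> 3"
  shows "\<not> p dvd q - 1"
proof
  assume "p dvd q - 1"
  then obtain c where c: "q - 1 = p * c" ..
  have "q \<ge> 2" using Pset_memD(1)[OF assms(2)] by (rule prime_ge_2_nat)
  then have "c \<noteq> 0" using c by (cases c) auto
  moreover have "p * c < p * 2"
    using c Pset_memD(2)[OF assms(2)] Pset_memD(3)[OF assms(1)] by linarith
  ultimately have "c = 1" by simp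
  then have "q = p + 1" using c \<open>q \<ge> 2\<close> by simp
  then show False
    using Pset_odd[OF assms(1,3)] Pset_odd[OF assms(2,3)] by simp
qed

lemma Pset_dvd_odd_power_add_one_imp_eq_pred:
  assumes P: "p \<in> Pset n" and "odd l" and "coprime l (p - 1)"
    and "a \<le> n" and "p dvd a ^ l + 1"
  shows "a = p - 1"
proof -
  have "p dvd a + 1"
    using Pset_memD(1)[OF P] assms(2,3,5) by (rule prime_dvd_odd_power_add_one_imp_dvd_add_one)
  then obtain c where c: "a + 1 = p * c" ..
  then have "c \<noteq> 0" by (cases c) auto
  moreover have "p * c < p * 2"
    using c assms(4) Pset_memD(3)[OF P] by linarith
  ultimately have "c = 1" by simp
  then show ?thesis using c by simp
qed

lemma Omega_eq_mult_remove:
  assumes "a \<in> {1..n}"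
  shows "Omega l n = (a ^ l + 1) * (\<Prod>b\<in>{1..n} - {a}. b ^ l + 1)"
  unfolding Omega_def using assms by (rule prod.remove[OF finite_atLeastAtMost])

lemma Pset_prime_dvd_exponent:
  assumes P: "p \<in> Pset n" and l: "odd l" and cop: "coprime l (p - 1)"
    and pow: "powerful (Omega l n)"
  shows "p dvd l"
proof -
  note p_prime = Pset_memD(1)[OF P]
  have p_pos: "p > 0" using p_prime by (rule prime_gt_0_nat)
  define R where "R = (\<Prod>b\<in>{1..n} - {p - 1}. b ^ l + 1)"
  have "p - 1 \<in> {1..n}"
    using Pset_memD[OF P] prime_ge_2_nat[OF p_prime] by auto
  then have Omega_eq: "Omega l n = ((p - 1) ^ l + 1) * R"
    unfolding R_def by (rule Omega_eq_mult_remove)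
  have "\<not> p dvd R"
  proof
    assume "p dvd R"
    then have "\<exists>b\<in>{1..n} - {p - 1}. p dvd b ^ l + 1"
      unfolding R_def using p_prime by (simp add: prime_dvd_prod_iff)
    then obtain b where "b \<in> {1..n} - {p - 1}" and "p dvd b ^ l + 1" ..
    then show False
      using Pset_dvd_odd_power_add_one_imp_eq_pred[OF P l cop] by auto
  qed
  then have "coprime (p^2) R"
    using p_prime by (simp add: prime_imp_coprime)
  moreover have "p^2 dvd ((p - 1) ^ l + 1) * R"
  proof -
    have "p dvd Omega l n"
      unfolding Omega_eq using dvd_odd_power_pred_add_one[OF l p_pos] by (rule dvd_mult2)
    then have "p^2 dvd Omega l n"
      using pow p_prime unfolding powerful_def by blast
    then show ?thesis unfolding Omega_eq .
  qed
  ultimately have "p^2 dvd (p - 1) ^ l + 1"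
    using coprime_dvd_mult_left_iff by blast
  then show ?thesis
    using square_dvd_odd_power_pred_add_one_iff[OF l p_pos] by blast
qed

lemma Pset_prime_factor_of_exponent:
  assumes P: "p \<in> Pset n" and l: "odd l" and pow: "powerful (Omega l n)"
  obtains q where "prime q" and "q dvd l" and "q = p \<or> q dvd p - 1"
proof (cases "coprime l (p - 1)")
  case True
  show ?thesis
    using Pset_memD(1)[OF P] Pset_prime_dvd_exponent[OF P l True pow] by (rule that) simp
next
  case False
  then have "gcd l (p - 1) \<noteq> 1"
    using coprime_iff_gcd_eq_1 by blast
  then obtain q where "prime q" and "q dvd gcd l (p - 1)"
    using prime_factor_nat by blast
  then show ?thesis
    by (intro that) auto
qed

theorem lemma3:
  fixes l n k :: nat and p :: "nat \<Rightarrow> nat"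
  assumes "l > 0" and "odd l" and "n \<ge> 3"
    and "inj_on p {..<k}"
    and "\<And>i. i < k \<Longrightarrow> p i \<in> Pset n"
    and "\<And>i j q. i < k \<Longrightarrow> j < k \<Longrightarrow> i \<noteq> j \<Longrightarrow> prime q \<Longrightarrow> odd q
           \<Longrightarrow> \<not> (q dvd (p i - 1) \<and> q dvd (p j - 1))"
    and "powerful (Omega l n)"
  shows "card (prime_factors l) \<ge> k"
proof -
  have "\<forall>i\<in>{..<k}. \<exists>q. prime q \<and> q dvd l \<and> (q = p i \<or> q dvd p i - 1)"
    using Pset_prime_factor_of_exponent assms(2,5,7) by (metis lessThan_iff)
  then obtain q where q: "\<And>i. i < k \<Longrightarrow> prime (q i) \<and> q i dvd l \<and> (q i = p i \<or> q i dvd p i - 1)"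
    by (metis bchoice lessThan_iff)
  have "inj_on q {..<k}"
  proof (rule inj_onI, rule ccontr)
    fix i j assume i: "i \<in> {..<k}" and j: "j \<in> {..<k}" and eq: "q i = q j" and "i \<noteq> j"
    have "odd (q i)"
      using q[of i] i assms(2) by (auto dest: dvd_trans[of 2])
    then show False
      using q[of i] q[of j] i j eq \<open>i \<noteq> j\<close> assms(4) assms(6)[of i j "q i"]
        Pset_not_dvd_pred[OF assms(5)[of i] assms(5)[of j] assms(3)]
        Pset_not_dvd_pred[OF assms(5)[of j] assms(5)[of i] assms(3)]
      by (auto dest: inj_onD)
  qed
  moreover have "q ` {..<k} \<subseteq> prime_factors l"
    using q assms(1) by (auto simp: in_prime_factors_iff)
  ultimately show ?thesis
    using card_inj_on_le[of q "{..<k}"] by simp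
qed

end
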